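(* Let $(X_B,X_C,X_R)$ be an OCC of a graph $G$, let $f_X$ be a proper $2$-coloring of $G[X_B]$, let $B^\ast \subseteq X_B$ satisfy property $(\star)$, and let $G'$ be the reduced graph. If $S'$ is a minimum-size odd cycle transversal of $G'$, then $S' \subseteq V(G) \cap V(G')$ and $S'$ is a minimum-size odd cycle transversal of $G$.
   Context: An odd cycle transversal (OCT) of a graph is a vertex set whose removal leaves a bipartite graph. An odd cycle cut (OCC) of $G$ is a partition $(X_B, X_C, X_R)$ of $V(G)$ such that $G[X_B]$ is bipartite, there is no edge between $X_B$ and $X_R$, and $X_B \cup X_C \neq \emptyset$. Auxiliary graph: $G_{\mathrm{aux}}$ is obtained from a copy of $G[X_B]$ by adding, for each $v \in X_C$, new vertices $v^{(0)}, v^{(1)}$ and, for each $u \in N_G(v) \cap X_B$, the edge $v^{(f_X(u))}u$; $T := \{v^{(i)} : v \in X_C, i \in \{0,1\}\}$. Property $(\star)$ of $B^\ast \subseteq X_B$: for every partition $(T_1,T_2,T_3,T_X)$ of $T$ into four possibly empty parts, if there exists $S \subseteq X_B$ with $|S| \le |T|$ separating $T_i$ and $T_j$ (no connected component of $G_{\mathrm{aux}} - T_X - S$ meets both) for all $1 \le i < j \le 3$, then $B^\ast$ contains such a set $S$ of minimum possible size. Reduced graph $G'$: start from $G - (X_B \setminus B^\ast)$; then, for every unordered pair $\{u,v\}$ of (not necessarily distinct) vertices of $X_C \cup B^\ast$ and every parity $p \in \{\text{even},\text{odd}\}$ such that $G$ contains a $(u,v)$-walk of length of parity $p$ that has at least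 one internal vertex and all of whose internal vertices lie in $X_B \setminus B^\ast$: if $p$ is even, add two new vertices $x, x'$, each adjacent to exactly $u$ and $v$; if $p$ is odd, add four new vertices $x,y,x',y'$ and the edges $ux, xy, yv, ux', x'y', y'v$. All added vertices are distinct and new. *)

theory Defs
  imports Main
begin

type_synonym 'a graph = "'a set \<times> 'a set set"

definition graph :: "'a graph \<Rightarrow> bool" where
  "graph G \<longleftrightarrow> finite (fst G) \<and>
     (\<forall>e\<in>snd G. \<exists>u v. u \<noteq> v \<and> e = {u, v} \<and> u \<in> fst G \<and> v \<in> fst G)"

definition bipartite_on :: "'a graph \<Rightarrow> 'a set \<Rightarrow> bool" where
  "bipartite_on G W \<longleftrightarrow>
     (\<exists>c :: 'a \<Rightarrow> bool. \<forall>u\<in>W. \<forall>v\<in>W. {u, v} \<in> snd G \<longrightarrow> c u \<noteq> c v)"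

definition is_oct :: "'a graph \<Rightarrow> 'a set \<Rightarrow> bool" where
  "is_oct G S \<longleftrightarrow> S \<subseteq> fst G \<and> bipartite_on G (fst G - S)"

definition is_min_oct :: "'a graph \<Rightarrow> 'a set \<Rightarrow> bool" where
  "is_min_oct G S \<longleftrightarrow> is_oct G S \<and> (\<forall>S'. is_oct G S' \<longrightarrow> card S \<le> card S')"

definition is_occ :: "'a graph \<Rightarrow> 'a set \<Rightarrow> 'a set \<Rightarrow> 'a set \<Rightarrow> bool" where
  "is_occ G XB XC XR \<longleftrightarrow>
     XB \<union> XC \<union> XR = fst G \<and> XB \<inter> XC = {} \<and> XB \<inter> XR = {} \<and> XC \<inter> XR = {} \<and>
     bipartite_on G XB \<and>
     (\<forall>u\<in>XB. \<forall>v\<in>XR. {u, v} \<notin> snd G) \<and>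
     XB \<union> XC \<noteq> {}"

definition proper_2col_on :: "'a graph \<Rightarrow> 'a set \<Rightarrow> ('a \<Rightarrow> bool) \<Rightarrow> bool" where
  "proper_2col_on G W f \<longleftrightarrow> (\<forall>u\<in>W. \<forall>v\<in>W. {u, v} \<in> snd G \<longrightarrow> f u \<noteq> f v)"

text \<open>Walks: lists of vertices, consecutive ones adjacent; length = length xs - 1.\<close>
definition is_walk :: "'a graph \<Rightarrow> 'a list \<Rightarrow> bool" where
  "is_walk G xs \<longleftrightarrow> xs \<noteq> [] \<and> set xs \<subseteq> fst G \<and>
     (\<forall>i. Suc i < length xs \<longrightarrow> {xs ! i, xs ! Suc i} \<in> snd G)"

definition connected_in :: "'a graph \<Rightarrow> 'a set \<Rightarrow> 'a \<Rightarrow> 'a \<Rightarrow> bool" where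
  "connected_in G W a b \<longleftrightarrow>
     a \<in> W \<and> (\<lambda>x y. x \<in> W \<and> y \<in> W \<and> {x, y} \<in> snd G)\<^sup>*\<^sup>* a b"

datatype 'a auxv = Base 'a | Term 'a bool

definition aux_graph :: "'a graph \<Rightarrow> 'a set \<Rightarrow> 'a set \<Rightarrow> ('a \<Rightarrow> bool) \<Rightarrow> 'a auxv graph" where
  "aux_graph G XB XC f =
     (Base ` XB \<union> {Term v i | v i. v \<in> XC},
      {{Base u, Base w} | u w. u \<in> XB \<and> w \<in> XB \<and> {u, w} \<in> snd G} \<union>
      {{Term v (f u), Base u} | u v. v \<in> XC \<and> u \<in> XB \<and> {u, v} \<in> snd G})"

definition terminals :: "'a set \<Rightarrow> 'a auxv set" where
  "terminals XC = {Term v i | v i. v \<in> XC}"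

definition separates3 ::
  "'a auxv graph \<Rightarrow> 'a set \<Rightarrow> 'a auxv set \<Rightarrow> 'a auxv set \<Rightarrow> 'a auxv set \<Rightarrow> 'a auxv set \<Rightarrow> bool" where
  "separates3 Ga S T1 T2 T3 TX \<longleftrightarrow>
     (let W = fst Ga - TX - Base ` S in
      \<forall>A\<in>{T1, T2, T3}. \<forall>B\<in>{T1, T2, T3}. A \<noteq> B \<longrightarrow>
        (\<forall>a\<in>A. \<forall>b\<in>B. \<not> connected_in Ga W a b))"

definition star_property :: "'a graph \<Rightarrow> 'a set \<Rightarrow> 'a set \<Rightarrow> ('a \<Rightarrow> bool) \<Rightarrow> 'a set \<Rightarrow> bool" where
  "star_property G XB XC f Bs \<longleftrightarrow>
     (let Ga = aux_graph G XB XC f; T = terminals XC in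
      \<forall>T1 T2 T3 TX.
        T1 \<union> T2 \<union> T3 \<union> TX = T \<and>
        T1 \<inter> T2 = {} \<and> T1 \<inter> T3 = {} \<and> T1 \<inter> TX = {} \<and>
        T2 \<inter> T3 = {} \<and> T2 \<inter> TX = {} \<and> T3 \<inter> TX = {} \<longrightarrow>
        (\<exists>S. S \<subseteq> XB \<and> card S \<le> card T \<and> separates3 Ga S T1 T2 T3 TX) \<longrightarrow>
        (\<exists>S. S \<subseteq> Bs \<and> separates3 Ga S T1 T2 T3 TX \<and>
             (\<forall>S'. S' \<subseteq> XB \<and> separates3 Ga S' T1 T2 T3 TX \<longrightarrow> card S \<le> card S')))"

text \<open>Vertices of G': original vertices Orig v, and new gadget vertices
Gad P odd k i attached to the unordered pair P = {u,v} (P has 1 or 2 elements),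
the parity (odd = True for odd walks), the copy index k \<in> {0,1}
(x vs x') and the position i \<in> {0,1} along the path (x vs y).\<close>

datatype 'a rv = Orig 'a | Gad "'a set" bool nat nat

definition pfst :: "'a set \<Rightarrow> 'a" where
  "pfst P = (SOME u. u \<in> P)"

definition psnd :: "'a set \<Rightarrow> 'a" where
  "psnd P = (SOME v. P = {pfst P, v})"

definition has_par_walk :: "'a graph \<Rightarrow> 'a set \<Rightarrow> 'a \<Rightarrow> 'a \<Rightarrow> bool \<Rightarrow> bool" where
  "has_par_walk G I u v odd_par \<longleftrightarrow>
     (\<exists>xs. is_walk G xs \<and> length xs \<ge> 3 \<and> hd xs = u \<and> last xs = v \<and>
           set (butlast (tl xs)) \<subseteq> I \<and> (odd (length xs - 1) \<longleftrightarrow> odd_par))"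

definition gadget_needed :: "'a graph \<Rightarrow> 'a set \<Rightarrow> 'a set \<Rightarrow> 'a set \<Rightarrow> 'a set \<Rightarrow> bool \<Rightarrow> bool" where
  "gadget_needed G XB XC Bs P odd_par \<longleftrightarrow>
     (\<exists>u v. P = {u, v} \<and> u \<in> XC \<union> Bs \<and> v \<in> XC \<union> Bs \<and>
            has_par_walk G (XB - Bs) u v odd_par)"

definition reduced_graph :: "'a graph \<Rightarrow> 'a set \<Rightarrow> 'a set \<Rightarrow> 'a set \<Rightarrow> 'a rv graph" where
  "reduced_graph G XB XC Bs =
     (let K = fst G - (XB - Bs) in
      (Orig ` K \<union>
       {Gad P False k 0 | P k. gadget_needed G XB XC Bs P False \<and> k < 2} \<union>
       {Gad P True k i | P k i. gadget_needed G XB XC Bs P True \<and> k < 2 \<and> i < 2},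
       {{Orig u, Orig v} | u v. u \<in> K \<and> v \<in> K \<and> {u, v} \<in> snd G} \<union>
       {{Orig (pfst P), Gad P False k 0} | P k. gadget_needed G XB XC Bs P False \<and> k < 2} \<union>
       {{Gad P False k 0, Orig (psnd P)} | P k. gadget_needed G XB XC Bs P False \<and> k < 2} \<union>
       {{Orig (pfst P), Gad P True k 0} | P k. gadget_needed G XB XC Bs P True \<and> k < 2} \<union>
       {{Gad P True k 0, Gad P True k 1} | P k. gadget_needed G XB XC Bs P True \<and> k < 2} \<union>
       {{Gad P True k 1, Orig (psnd P)} | P k. gadget_needed G XB XC Bs P True \<and> k < 2}))"

end

(*
  A minimum OCT of the reduced graph G' never uses gadget vertices: if one of the two parallel
  copies of a gadget is untouched, all gadget vertices can be dropped, and otherwise the two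
  hit copies can be traded for one end of the gadget. An OCT of G' avoiding the gadgets pulls
  back to an OCT of G of the same size: G[X_B - B*] is bipartite, and every walk through it
  between two surviving vertices of X_C \<union> B* is mirrored by a gadget of the same parity, so
  the colouring of G' extends along such walks.

  Conversely, let S be a minimum OCT of G with a 2-colouring c of G - S. Comparing c with f
  on X_B shows that S \<inter> X_B separates the terminals Term v (c v) from the terminals
  Term v (\<not> c v) in the auxiliary graph, and minimality bounds its size by |T|. Property
  (\<star>) then provides a separator Ss \<subseteq> B* of at most that size; flipping f on the
  part of X_B connected to the first group of terminals shows that (S - X_B) \<union> Ss is an
  OCT of G, which avoids X_B - B* and hence is also an OCT of G'.
*)

theory Submission
  imports Defs
begin

section \<open>Walks and 2-colourings\<close>

lemma bipartite_on_iff_proper_2col: "bipartite_on G W \<longleftrightarrow> (\<exists>c. proper_2col_on G W c)"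
  unfolding bipartite_on_def proper_2col_on_def ..

lemma min_oct_exists: "\<exists>S. is_min_oct G S"
  using ex_has_least_nat[of "is_oct G" "fst G" card]
  unfolding is_min_oct_def is_oct_def bipartite_on_def by auto

lemma is_walk_iff_successively:
  "is_walk G xs \<longleftrightarrow> xs \<noteq> [] \<and> set xs \<subseteq> fst G \<and> successively (\<lambda>x y. {x, y} \<in> snd G) xs"
  by (simp add: is_walk_def successively_conv_nth)

lemma successively_neq_parity:
  fixes c :: "'a \<Rightarrow> bool"
  assumes "successively (\<lambda>x y. c x \<noteq> c y) xs" "xs \<noteq> []"
  shows "(c (hd xs) \<noteq> c (last xs)) \<longleftrightarrow> odd (length xs - 1)"
  using assms
proof (induction "\<lambda>x y. c x \<noteq> c y" xs rule: successively.induct)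
  case (3 x y xs)
  have "c x \<noteq> c y" "c y \<noteq> c (last (y # xs)) \<longleftrightarrow> odd (length xs)"
    using 3 by auto
  then show ?case by auto
qed simp_all

lemma proper_2col_walk_parity:
  fixes c :: "'a \<Rightarrow> bool"
  assumes c: "proper_2col_on G W c" and xs: "is_walk G xs" "set xs \<subseteq> W"
  shows "(c (hd xs) \<noteq> c (last xs)) \<longleftrightarrow> odd (length xs - 1)"
proof (rule successively_neq_parity)
  have "successively (\<lambda>x y. x \<in> W \<and> y \<in> W \<and> {x, y} \<in> snd G) xs"
    using xs unfolding is_walk_iff_successively by (auto simp: successively_conv_nth)
  then show "successively (\<lambda>x y. c x \<noteq> c y) xs"
    by (rule successively_mono) (use c in \<open>auto simp: proper_2col_on_def\<close>)
qed (use xs in \<open>simp add: is_walk_def\<close>)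

lemma set_hd_last_butlast_tl:
  assumes "2 \<le> length xs"
  shows "set xs = insert (hd xs) (insert (last xs) (set (butlast (tl xs))))"
proof (cases xs)
  case (Cons x ys)
  then have "ys \<noteq> []"
    using assms by auto
  then have "set ys = insert (last ys) (set (butlast ys))"
    by (induction ys rule: rev_induct) auto
  then show ?thesis
    using Cons \<open>ys \<noteq> []\<close> by simp
qed (use assms in simp)

lemma has_par_walk_parity:
  fixes c :: "'a \<Rightarrow> bool"
  assumes "proper_2col_on G W c" "has_par_walk G I u v p" "I \<subseteq> W" "u \<in> W" "v \<in> W"
  shows "(c u \<noteq> c v) \<longleftrightarrow> p"
proof -
  obtain xs where xs: "is_walk G xs" "3 \<le> length xs" "hd xs = u" "last xs = v"
    "set (butlast (tl xs)) \<subseteq> I" "odd (length xs - 1) \<longleftrightarrow> p"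
    using assms(2) unfolding has_par_walk_def by blast
  have "set xs \<subseteq> W"
    using set_hd_last_butlast_tl[of xs] xs assms(3-5) by auto
  then show ?thesis
    using proper_2col_walk_parity[OF assms(1) xs(1)] xs by simp
qed

lemma has_par_walk_sym:
  assumes "has_par_walk G I u v p"
  shows "has_par_walk G I v u p"
proof -
  obtain xs where xs: "is_walk G xs" "3 \<le> length xs" "hd xs = u" "last xs = v"
    "set (butlast (tl xs)) \<subseteq> I" "odd (length xs - 1) \<longleftrightarrow> p"
    using assms unfolding has_par_walk_def by blast
  have "is_walk G (rev xs)"
    using xs(1) unfolding is_walk_iff_successively by (simp add: insert_commute)
  moreover have "butlast (tl (rev xs)) = rev (butlast (tl xs))"
    by (metis butlast_rev butlast_tl rev_rev_ident)
  ultimately show ?thesis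
    unfolding has_par_walk_def using xs
    by (intro exI[of _ "rev xs"]) (auto simp: hd_rev last_rev)
qed

lemma has_par_walk_first_step:
  assumes "has_par_walk G I u v p"
  obtains y where "y \<in> I" "{u, y} \<in> snd G"
proof -
  obtain xs where xs: "is_walk G xs" "3 \<le> length xs" "hd xs = u" "set (butlast (tl xs)) \<subseteq> I"
    using assms unfolding has_par_walk_def by blast
  then obtain y ys where "xs = u # y # ys" "ys \<noteq> []"
    by (auto simp: numeral_3_eq_3 Suc_le_length_iff)
  then show ?thesis
    using xs that unfolding is_walk_iff_successively by auto
qed

definition entering_walk :: "'a graph \<Rightarrow> 'a set \<Rightarrow> 'a set \<Rightarrow> 'a list \<Rightarrow> bool" where
  "entering_walk G A I w \<longleftrightarrow> is_walk G w \<and> 2 \<le> length w \<and> hd w \<in> A \<and> set (tl w) \<subseteq> I"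

lemma entering_walk_snoc:
  assumes "entering_walk G A I w" "x \<in> I" "x \<in> fst G" "{last w, x} \<in> snd G"
  shows "entering_walk G A I (w @ [x])"
  using assms unfolding entering_walk_def is_walk_iff_successively
  by (auto simp: successively_append_iff)

text \<open>Under the parity hypothesis on A, the colour transported along a walk entering I from A
  does not depend on the walk (glued_colouring_entering), so the choice made by SOME is harmless.\<close>

definition glued_colouring ::
  "'a graph \<Rightarrow> 'a set \<Rightarrow> 'a set \<Rightarrow> ('a \<Rightarrow> bool) \<Rightarrow> ('a \<Rightarrow> bool) \<Rightarrow> 'a \<Rightarrow> bool" where
  "glued_colouring G A I c f x =
     (if x \<in> A then c x
      else if \<exists>w. entering_walk G A I w \<and> last w = x
      then (let w = SOME w. entering_walk G A I w \<and> last w = x in c (hd w) \<noteq> odd (length w - 1))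
      else f x)"

context
  fixes G :: "'a graph" and A I :: "'a set" and c :: "'a \<Rightarrow> bool"
  assumes walks: "\<And>a a' p. a \<in> A \<Longrightarrow> a' \<in> A \<Longrightarrow> has_par_walk G I a a' p \<Longrightarrow> (c a \<noteq> c a') = p"
begin

lemma entering_walks_same_end_parity:
  assumes w: "entering_walk G A I w" and w': "entering_walk G A I w'" and "last w = last w'"
  shows "(c (hd w) \<noteq> odd (length w - 1)) \<longleftrightarrow> (c (hd w') \<noteq> odd (length w' - 1))"
proof -
  define u where "u = butlast w'"
  have u: "w' = u @ [last w]" "u \<noteq> []"
    using w' \<open>last w = last w'\<close> unfolding u_def entering_walk_def
    by (auto simp flip: length_0_conv)
  define v where "v = w @ rev u"
  have "has_par_walk G I (hd w) (hd w') (odd (length w + length w' - 2))"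
    unfolding has_par_walk_def
  proof (intro exI[of _ v] conjI)
    show "is_walk G v"
      using w w' u unfolding v_def entering_walk_def is_walk_iff_successively
      by (auto simp: successively_append_iff insert_commute hd_rev)
    show "3 \<le> length v" "hd v = hd w" "last v = hd w'"
      using w w' u unfolding v_def entering_walk_def
      by (auto simp: last_rev is_walk_def)
    show "set (butlast (tl v)) \<subseteq> I"
      using w w' u unfolding v_def entering_walk_def
      by (auto simp: butlast_append tl_append2 is_walk_def)
  qed (use u in \<open>simp add: v_def\<close>)
  then have "(c (hd w) \<noteq> c (hd w')) = odd (length w + length w' - 2)"
    using walks w w' unfolding entering_walk_def by blast
  moreover have "odd (length w + length w' - 2) \<longleftrightarrow> (odd (length w - 1) \<noteq> odd (length w' - 1))"
  proof -
    have "2 \<le> length w" "2 \<le> length w'"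
      using w w' unfolding entering_walk_def by auto
    then show ?thesis by presburger
  qed
  ultimately show ?thesis
    by auto
qed

lemma glued_colouring_entering:
  assumes "x \<notin> A" "entering_walk G A I w" "last w = x"
  shows "glued_colouring G A I c f x = (c (hd w) \<noteq> odd (length w - 1))"
proof -
  define w0 where "w0 = (SOME w. entering_walk G A I w \<and> last w = x)"
  have "entering_walk G A I w0 \<and> last w0 = x"
    unfolding w0_def by (rule someI_ex) (use assms(2,3) in blast)
  then have "(c (hd w0) \<noteq> odd (length w0 - 1)) = (c (hd w) \<noteq> odd (length w - 1))"
    using assms(2,3) by (intro entering_walks_same_end_parity) auto
  moreover have "glued_colouring G A I c f x = (c (hd w0) \<noteq> odd (length w0 - 1))"
    using assms(1-3) unfolding glued_colouring_def w0_def Let_def by (simp, blast)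
  ultimately show ?thesis
    by simp
qed

lemma glued_colouring_step:
  assumes w: "entering_walk G A I w" "last w = a" and "a \<notin> A" "b \<in> I - A" "b \<in> fst G" "{a, b} \<in> snd G"
  shows "glued_colouring G A I c f a \<noteq> glued_colouring G A I c f b"
proof -
  have "2 \<le> length w"
    using w(1) unfolding entering_walk_def by auto
  have "entering_walk G A I (w @ [b])"
    using entering_walk_snoc[OF w(1)] assms(4-6) w(2) by blast
  then have "glued_colouring G A I c f b = (c (hd (w @ [b])) \<noteq> odd (length (w @ [b]) - 1))"
    using \<open>b \<in> I - A\<close> by (intro glued_colouring_entering) auto
  also have "hd (w @ [b]) = hd w"
    using \<open>2 \<le> length w\<close> by (cases w) auto
  also have "odd (length (w @ [b]) - 1) \<longleftrightarrow> \<not> odd (length w - 1)"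
    using \<open>2 \<le> length w\<close> by (simp only: length_append_singleton diff_Suc_1) presburger
  finally show ?thesis
    using glued_colouring_entering[OF \<open>a \<notin> A\<close> w] by simp
qed

lemma glued_colouring_edge:
  assumes "A \<union> I \<subseteq> fst G" and f: "proper_2col_on G I f"
    and "x \<in> A \<union> I" "y \<in> I - A" "{x, y} \<in> snd G"
  shows "glued_colouring G A I c f x \<noteq> glued_colouring G A I c f y"
proof (cases "x \<in> A")
  case True
  then have "entering_walk G A I [x, y]"
    using assms(1,3-5) unfolding entering_walk_def is_walk_def by (auto simp: less_Suc_eq)
  then show ?thesis
    using glued_colouring_entering[where w = "[x, y]"] True \<open>y \<in> I - A\<close>
    unfolding glued_colouring_def by simp
next
  case False
  let ?enters = "\<lambda>z w. entering_walk G A I w \<and> last w = z"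
  show ?thesis
  proof (cases "\<exists>w. ?enters x w \<or> ?enters y w")
    case True
    then show ?thesis
      using glued_colouring_step[where a = x and b = y]
        glued_colouring_step[where a = y and b = x]
        False assms(1,3-5) by (auto simp: insert_commute)
  next
    case False
    then show ?thesis
      using f \<open>x \<notin> A\<close> assms(3-5) unfolding glued_colouring_def proper_2col_on_def by auto
  qed
qed

lemma bipartite_on_glue_along_walks:
  assumes "A \<union> I \<subseteq> fst G" and f: "proper_2col_on G I f" and c: "proper_2col_on G A c"
  shows "bipartite_on G (A \<union> I)"
proof -
  let ?col = "glued_colouring G A I c f"
  have "proper_2col_on G (A \<union> I) ?col"
    unfolding proper_2col_on_def
  proof (intro ballI impI)
    fix x y assume xy: "x \<in> A \<union> I" "y \<in> A \<union> I" "{x, y} \<in> snd G"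
    consider "y \<notin> A" | "x \<notin> A" | "x \<in> A" "y \<in> A" by blast
    then show "?col x \<noteq> ?col y"
    proof cases
      case 1
      then show ?thesis
        using glued_colouring_edge[OF assms(1) f] xy by blast
    next
      case 2
      then show ?thesis
        using glued_colouring_edge[OF assms(1) f, where x = y and y = x] xy by (simp add: insert_commute)
    next
      case 3
      then show ?thesis
        using c xy unfolding proper_2col_on_def glued_colouring_def by simp
    qed
  qed
  then show ?thesis
    unfolding bipartite_on_iff_proper_2col by blast
qed

end

section \<open>Separation in the auxiliary graph\<close>

lemma connected_in_sym:
  assumes "connected_in G W a b" shows "connected_in G W b a"
proof -
  let ?R = "\<lambda>x y. x \<in> W \<and> y \<in> W \<and> {x, y} \<in> snd G"
  have "?R\<^sup>*\<^sup>* a b" "a \<in> W"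
    using assms unfolding connected_in_def by auto
  moreover from this have "b \<in> W"
    by (induction rule: rtranclp_induct) auto
  moreover have "?R\<inverse>\<inverse> = ?R"
    by (auto simp: fun_eq_iff insert_commute)
  then have "?R\<^sup>*\<^sup>* b a"
    using rtranclp_converseI[OF \<open>?R\<^sup>*\<^sup>* a b\<close>] by simp
  ultimately show ?thesis
    unfolding connected_in_def by blast
qed

lemma connected_in_step:
  "connected_in G W a x \<Longrightarrow> x \<in> W \<Longrightarrow> y \<in> W \<Longrightarrow> {x, y} \<in> snd G \<Longrightarrow> connected_in G W a y"
  unfolding connected_in_def by (auto intro: rtranclp.rtrancl_into_rtrancl)

lemma connected_in_invariant:
  assumes "connected_in G W a b"
    and "\<And>x y. x \<in> W \<Longrightarrow> y \<in> W \<Longrightarrow> {x, y} \<in> snd G \<Longrightarrow> h x = h y"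
  shows "h a = h b"
proof -
  have "(\<lambda>x y. x \<in> W \<and> y \<in> W \<and> {x, y} \<in> snd G)\<^sup>*\<^sup>* a b"
    using assms(1) unfolding connected_in_def by blast
  then show ?thesis
    by (induction rule: rtranclp_induct) (auto dest: assms(2))
qed

lemma separates3_two_sidesI:
  assumes "\<And>a b. a \<in> T1 \<Longrightarrow> b \<in> T2 \<Longrightarrow> \<not> connected_in Ga (fst Ga - TX - Base ` S) a b"
  shows "separates3 Ga S T1 T2 {} TX"
  using assms connected_in_sym unfolding separates3_def Let_def by fast

lemma separates3_two_sidesD:
  assumes "separates3 Ga S T1 T2 {} TX" "T1 \<inter> T2 = {}" "a \<in> T1" "b \<in> T2"
  shows "\<not> connected_in Ga (fst Ga - TX - Base ` S) a b"
proof -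
  have "T1 \<noteq> T2"
    using assms(2-4) by blast
  then show ?thesis
    using assms(1,3,4) unfolding separates3_def Let_def by blast
qed

definition reached_from :: "'v graph \<Rightarrow> 'v set \<Rightarrow> 'v set \<Rightarrow> 'v \<Rightarrow> bool" where
  "reached_from G W T x \<longleftrightarrow> (\<exists>t \<in> T. connected_in G W t x)"

lemma reached_from_edge:
  assumes "x \<in> W" "y \<in> W" "{x, y} \<in> snd G"
  shows "reached_from G W T x \<longleftrightarrow> reached_from G W T y"
  using assms connected_in_step[of G W _ x y] connected_in_step[of G W _ y x]
  unfolding reached_from_def by (auto simp: insert_commute)

text \<open>The terminal Term v i is attached to exactly those neighbours u of v in XB with
  f u = i. For a colouring c of G - S, the terminals Term v (c v) and Term v (\<not> c v),
  v \<in> XC - S, are the two sides T1 and T2 that S \<inter> XB has to separate.\<close>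

definition coloured_terminals :: "('a \<Rightarrow> bool) \<Rightarrow> 'a set \<Rightarrow> 'a auxv set" where
  "coloured_terminals c A = {Term v (c v) | v. v \<in> A}"

text \<open>An edge of the auxiliary graph outside S preserves whether c differs from f at a base
  vertex, respectively agrees with the label of a terminal.\<close>

definition colour_side :: "('a \<Rightarrow> bool) \<Rightarrow> ('a \<Rightarrow> bool) \<Rightarrow> 'a auxv \<Rightarrow> bool" where
  "colour_side c f x = (case x of Base u \<Rightarrow> c u \<noteq> f u | Term v i \<Rightarrow> c v = i)"

lemma coloured_terminals_disjoint: "coloured_terminals c A \<inter> coloured_terminals (Not \<circ> c) A = {}"
  unfolding coloured_terminals_def by auto

lemma terminals_partition:
  fixes c :: "'a \<Rightarrow> bool" and S XC :: "'a set"
  defines "T1 \<equiv> coloured_terminals c (XC - S)" and "T2 \<equiv> coloured_terminals (Not \<circ> c) (XC - S)"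
    and "TX \<equiv> terminals (XC \<inter> S)"
  shows "T1 \<union> T2 \<union> {} \<union> TX = terminals XC \<and> T1 \<inter> T2 = {} \<and> T1 \<inter> {} = {} \<and> T1 \<inter> TX = {} \<and>
    T2 \<inter> {} = {} \<and> T2 \<inter> TX = {} \<and> {} \<inter> TX = {}"
  unfolding assms coloured_terminals_def terminals_def by auto

section \<open>The reduced graph\<close>

lemma gadget_needed_pair:
  assumes "gadget_needed G XB XC Bs P b"
  shows "P = {pfst P, psnd P}" "pfst P \<in> XC \<union> Bs" "psnd P \<in> XC \<union> Bs"
proof -
  obtain u v where uv: "P = {u, v}" "u \<in> XC \<union> Bs" "v \<in> XC \<union> Bs"
    using assms unfolding gadget_needed_def by blast
  then have "pfst P \<in> P"
    unfolding pfst_def by (metis insertI1 someI)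
  then have "\<exists>w. P = {pfst P, w}"
    using uv(1) by auto
  then show P: "P = {pfst P, psnd P}"
    unfolding psnd_def by (rule someI_ex)
  have "{pfst P, psnd P} \<subseteq> XC \<union> Bs"
    unfolding P[symmetric] using uv by blast
  then show "pfst P \<in> XC \<union> Bs" "psnd P \<in> XC \<union> Bs"
    by simp_all
qed

definition gadget :: "'a set \<Rightarrow> bool \<Rightarrow> 'a rv set" where
  "gadget P b = {Gad P b k i | k i. True}"

definition recoloured :: "('a set \<Rightarrow> bool \<Rightarrow> bool) \<Rightarrow> 'a rv \<Rightarrow> bool" where
  "recoloured R x \<longleftrightarrow> (case x of Orig u \<Rightarrow> False | Gad Q b k i \<Rightarrow> R Q b)"

definition gadget_recolouring ::
  "'a rv set \<Rightarrow> ('a rv \<Rightarrow> bool) \<Rightarrow> ('a set \<Rightarrow> bool \<Rightarrow> bool) \<Rightarrow> 'a rv \<Rightarrow> bool" where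
  "gadget_recolouring W d R x = (case x of
      Orig u \<Rightarrow> d x
    | Gad Q b k i \<Rightarrow> if R Q b then (i = 0) =
        (if Orig (pfst Q) \<in> W then \<not> d (Orig (pfst Q)) else d (Orig (psnd Q)) = b) else d x)"

locale occ_reduction =
  fixes G :: "'a graph" and XB XC XR Bs :: "'a set" and f :: "'a \<Rightarrow> bool"
  assumes graph: "graph G" and occ: "is_occ G XB XC XR" and f: "proper_2col_on G XB f"
    and Bs: "Bs \<subseteq> XB"
begin

abbreviation "K \<equiv> fst G - (XB - Bs)"
abbreviation "G' \<equiv> reduced_graph G XB XC Bs"
abbreviation "gn \<equiv> gadget_needed G XB XC Bs"
abbreviation "Ga \<equiv> aux_graph G XB XC f"

lemma occ_parts:
  "XB \<union> XC \<union> XR = fst G" "XB \<inter> XC = {}" "XB \<inter> XR = {}" "XC \<inter> XR = {}"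
  "\<And>u v. u \<in> XB \<Longrightarrow> v \<in> XR \<Longrightarrow> {u, v} \<notin> snd G"
  using occ unfolding is_occ_def by blast+

lemma finite_vertices: "finite (fst G)"
  using graph unfolding graph_def by simp

lemma gadget_needed_subset: "gn P b \<Longrightarrow> P \<subseteq> K"
  using Bs occ_parts(1-3) unfolding gadget_needed_def by blast

lemma gadget_ends_in_K: "gn P b \<Longrightarrow> pfst P \<in> K \<and> psnd P \<in> K"
  using gadget_needed_pair(2,3) Bs occ_parts(1-3) by blast

lemma reduced_graph_edges: "snd G' =
      {{Orig u, Orig v} | u v. u \<in> K \<and> v \<in> K \<and> {u, v} \<in> snd G} \<union>
      {{Orig (pfst P), Gad P False k 0} | P k. gn P False \<and> k < 2} \<union>
      {{Gad P False k 0, Orig (psnd P)} | P k. gn P False \<and> k < 2} \<union>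
      {{Orig (pfst P), Gad P True k 0} | P k. gn P True \<and> k < 2} \<union>
      {{Gad P True k 0, Gad P True k 1} | P k. gn P True \<and> k < 2} \<union>
      {{Gad P True k 1, Orig (psnd P)} | P k. gn P True \<and> k < 2}"
  by (simp add: reduced_graph_def Let_def)

lemma reduced_graph_vertices: "fst G' =
      Orig ` K \<union> {Gad P False k 0 | P k. gn P False \<and> k < 2} \<union>
      {Gad P True k i | P k i. gn P True \<and> k < 2 \<and> i < 2}"
  by (simp add: reduced_graph_def Let_def)

lemma finite_reduced_graph: "finite (fst G')"
proof (rule finite_subset)
  show "fst G' \<subseteq> Orig ` fst G \<union> (\<lambda>(P, b, k, i). Gad P b k i) ` (Pow (fst G) \<times> UNIV \<times> {..<2} \<times> {..<2})"
    unfolding reduced_graph_vertices using gadget_needed_subset by (fastforce simp: image_iff)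
  show "finite (Orig ` fst G \<union> (\<lambda>(P, b, k, i). Gad P b k i) ` (Pow (fst G) \<times> UNIV \<times> {..<2} \<times> {..<2}))"
    using finite_vertices by simp
qed

lemma orig_vertex: "u \<in> K \<Longrightarrow> Orig u \<in> fst G'"
  unfolding reduced_graph_vertices by (intro UnI1) blast

lemma orig_edge: "u \<in> K \<Longrightarrow> v \<in> K \<Longrightarrow> {u, v} \<in> snd G \<Longrightarrow> {Orig u, Orig v} \<in> snd G'"
  unfolding reduced_graph_edges by (intro UnI1) blast

lemma gadget_vertices:
  assumes "gn P b" "k < 2"
  shows "Gad P b k 0 \<in> fst G'" "b \<Longrightarrow> Gad P b k 1 \<in> fst G'"
  using assms unfolding reduced_graph_vertices by (cases b; auto)+

lemma gadget_copy_parity: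
  fixes c :: "'a rv \<Rightarrow> bool"
  assumes c: "proper_2col_on G' W c" and P: "gn P b" "k < 2"
    and W: "Gad P b k 0 \<in> W" "b \<longrightarrow> Gad P b k 1 \<in> W" "Orig (pfst P) \<in> W" "Orig (psnd P) \<in> W"
  shows "(c (Orig (pfst P)) \<noteq> c (Orig (psnd P))) = b"
proof (cases b)
  case False
  then have "{Orig (pfst P), Gad P b k 0} \<in> snd G'" "{Gad P b k 0, Orig (psnd P)} \<in> snd G'"
    using P unfolding reduced_graph_edges by auto
  then show ?thesis
    using c W False unfolding proper_2col_on_def by auto
next
  case True
  then have "{Orig (pfst P), Gad P b k 0} \<in> snd G'" "{Gad P b k 0, Gad P b k 1} \<in> snd G'"
    "{Gad P b k 1, Orig (psnd P)} \<in> snd G'"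
    using P unfolding reduced_graph_edges by auto
  then show ?thesis
    using c W True unfolding proper_2col_on_def by auto
qed

lemma gadget_recolouring_gadget_edge:
  fixes d :: "'a rv \<Rightarrow> bool"
  assumes ends: "\<And>Q b. R Q b \<Longrightarrow> gn Q b \<Longrightarrow> Orig (pfst Q) \<in> W \<Longrightarrow> Orig (psnd Q) \<in> W \<Longrightarrow>
        (d (Orig (pfst Q)) \<noteq> d (Orig (psnd Q))) = b"
    and e: "{x, y} \<in> snd G'" and xy: "x \<in> W" "y \<in> W" and rec: "recoloured R x \<or> recoloured R y"
  shows "gadget_recolouring W d R x \<noteq> gadget_recolouring W d R y"
proof -
  let ?c = "gadget_recolouring W d R"
  have pair: "?c x \<noteq> ?c y" if "{x, y} = {a, b}" "a \<in> W \<Longrightarrow> b \<in> W \<Longrightarrow> ?c a \<noteq> ?c b" for a b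
    using that xy by (auto simp: doubleton_eq_iff)
  have R: "R P b" if "{x, y} = {a, Gad P b k i}" "\<not> recoloured R a" for a P b k i
    using rec that by (auto simp: recoloured_def doubleton_eq_iff)
  from e show ?thesis
    unfolding reduced_graph_edges
  proof (elim UnE CollectE exE conjE)
    fix u v assume "{x, y} = {Orig u, Orig v}"
    then show ?thesis
      using rec by (auto simp: recoloured_def doubleton_eq_iff)
  next
    fix P k assume xy_eq: "{x, y} = {Orig (pfst P), Gad P False k 0}"
    then show ?thesis
      using R[OF xy_eq] by (intro pair[OF xy_eq]) (simp add: gadget_recolouring_def recoloured_def)
  next
    fix P k assume xy_eq: "{x, y} = {Gad P False k 0, Orig (psnd P)}" and "gn P False"
    then have "R P False"
      using R[of "Orig (psnd P)"] by (simp add: insert_commute recoloured_def)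
    then show ?thesis
      using ends[OF _ \<open>gn P False\<close>] by (intro pair[OF xy_eq]) (auto simp: gadget_recolouring_def)
  next
    fix P k assume xy_eq: "{x, y} = {Orig (pfst P), Gad P True k 0}"
    then show ?thesis
      using R[OF xy_eq] by (intro pair[OF xy_eq]) (simp add: gadget_recolouring_def recoloured_def)
  next
    fix P k assume xy_eq: "{x, y} = {Gad P True k 0, Gad P True k 1}"
    then show ?thesis
      using rec by (intro pair[OF xy_eq]) (auto simp: gadget_recolouring_def recoloured_def doubleton_eq_iff)
  next
    fix P k assume xy_eq: "{x, y} = {Gad P True k 1, Orig (psnd P)}" and "gn P True"
    then have "R P True"
      using R[of "Orig (psnd P)"] by (simp add: insert_commute recoloured_def)
    then show ?thesis
      using ends[OF _ \<open>gn P True\<close>] by (intro pair[OF xy_eq]) (auto simp: gadget_recolouring_def)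
  qed
qed

lemma bipartite_reduced_graph_recolour:
  fixes d :: "'a rv \<Rightarrow> bool"
  assumes d: "\<And>x y. {x, y} \<in> snd G' \<Longrightarrow> x \<in> W \<Longrightarrow> y \<in> W \<Longrightarrow>
        \<not> recoloured R x \<Longrightarrow> \<not> recoloured R y \<Longrightarrow> d x \<noteq> d y"
    and ends: "\<And>Q b. R Q b \<Longrightarrow> gn Q b \<Longrightarrow> Orig (pfst Q) \<in> W \<Longrightarrow> Orig (psnd Q) \<in> W \<Longrightarrow>
        (d (Orig (pfst Q)) \<noteq> d (Orig (psnd Q))) = b"
  shows "bipartite_on G' W"
  unfolding bipartite_on_def
proof (intro exI[of _ "gadget_recolouring W d R"] ballI impI)
  fix x y assume xy: "x \<in> W" "y \<in> W" and e: "{x, y} \<in> snd G'"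
  show "gadget_recolouring W d R x \<noteq> gadget_recolouring W d R y"
  proof (cases "recoloured R x \<or> recoloured R y")
    case True
    then show ?thesis
      using gadget_recolouring_gadget_edge[OF ends e xy] by blast
  next
    case False
    then show ?thesis
      using d[OF e xy] by (auto simp: gadget_recolouring_def recoloured_def split: rv.splits)
  qed
qed

lemma recoloured_single_gadget: "recoloured (\<lambda>Q b'. Q = P \<and> b' = b) x \<longleftrightarrow> x \<in> gadget P b"
  by (auto simp: recoloured_def gadget_def split: rv.splits)

lemma oct_drop_gadget:
  assumes S: "is_oct G' S" and P: "gn P b" "k < 2"
    and free: "Gad P b k 0 \<notin> S" "b \<longrightarrow> Gad P b k 1 \<notin> S"
  shows "is_oct G' (S - gadget P b)"
proof -
  obtain c where c: "proper_2col_on G' (fst G' - S) c"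
    using S unfolding is_oct_def bipartite_on_iff_proper_2col by blast
  have "Gad P b k 0 \<in> fst G' - S" "b \<longrightarrow> Gad P b k 1 \<in> fst G' - S"
    using P free gadget_vertices[OF P] by auto
  then have "bipartite_on G' (fst G' - (S - gadget P b))"
    using c gadget_copy_parity[OF c P]
    by (intro bipartite_reduced_graph_recolour[where d = c and R = "\<lambda>Q b'. Q = P \<and> b' = b"])
      (auto simp: recoloured_single_gadget proper_2col_on_def gadget_def)
  then show ?thesis
    using S unfolding is_oct_def by auto
qed

lemma oct_swap_gadget:
  assumes S: "is_oct G' S" and P: "gn P b"
  shows "is_oct G' (S - gadget P b \<union> {Orig (pfst P)})"
proof -
  obtain c where c: "proper_2col_on G' (fst G' - S) c"
    using S unfolding is_oct_def bipartite_on_iff_proper_2col by blast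
  have "bipartite_on G' (fst G' - (S - gadget P b \<union> {Orig (pfst P)}))"
    using c
    by (intro bipartite_reduced_graph_recolour[where d = c and R = "\<lambda>Q b'. Q = P \<and> b' = b"])
      (auto simp: recoloured_single_gadget proper_2col_on_def gadget_def)
  moreover have "Orig (pfst P) \<in> fst G'"
    using orig_vertex gadget_ends_in_K[OF P] by blast
  ultimately show ?thesis
    using S unfolding is_oct_def by auto
qed

lemma min_oct_reduced_graph_avoids_gadgets:
  assumes min: "is_min_oct G' S"
  shows "S \<subseteq> Orig ` K"
proof (rule ccontr)
  assume "\<not> S \<subseteq> Orig ` K"
  then obtain g where g: "g \<in> S" "g \<notin> Orig ` K" by blast
  have S: "is_oct G' S" and smaller: "\<And>S'. is_oct G' S' \<Longrightarrow> card S \<le> card S'"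
    using min unfolding is_min_oct_def by auto
  have fin: "finite S"
    using S finite_reduced_graph unfolding is_oct_def by (rule finite_subset[OF conjunct1])
  obtain P b where P: "gn P b" and "g \<in> gadget P b"
    using g S unfolding is_oct_def reduced_graph_vertices gadget_def by blast
  show False
  proof (cases "\<exists>k<2. Gad P b k 0 \<notin> S \<and> (b \<longrightarrow> Gad P b k 1 \<notin> S)")
    case True
    then obtain k where "k < 2" "Gad P b k 0 \<notin> S" "b \<longrightarrow> Gad P b k 1 \<notin> S" by blast
    then have "is_oct G' (S - gadget P b)"
      using oct_drop_gadget[OF S P] by blast
    moreover have "card (S - gadget P b) < card S"
      using fin g \<open>g \<in> gadget P b\<close> by (intro psubset_card_mono) auto
    ultimately show False
      using smaller by fastforce
  next
    case False
    then have "\<exists>i. Gad P b k i \<in> S" if "k < 2" for k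
      using that by blast
    then obtain i0 i1 where hit: "Gad P b 0 i0 \<in> S" "Gad P b 1 i1 \<in> S"
      by fastforce
    have "2 \<le> card (S \<inter> gadget P b)"
      using hit fin card_mono[of "S \<inter> gadget P b" "{Gad P b 0 i0, Gad P b 1 i1}"]
      by (auto simp: gadget_def)
    then have "card (S - gadget P b \<union> {Orig (pfst P)}) < card S"
      using fin card_Diff_subset_Int[of S "gadget P b"] card_Un_le[of "S - gadget P b" "{Orig (pfst P)}"]
        card_mono[of S "S \<inter> gadget P b"]
      by (auto simp: card_Diff_subset_Int)
    then show False
      using smaller[OF oct_swap_gadget[OF S P]] by simp
  qed
qed

lemma has_par_walk_gadget_needed:
  assumes walk: "has_par_walk G (XB - Bs) a a' p" and "a \<in> K" "a' \<in> K"
  shows "gn {a, a'} p"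
proof -
  have "a \<notin> XR" "a' \<notin> XR"
    using has_par_walk_first_step[OF walk] has_par_walk_first_step[OF has_par_walk_sym[OF walk]]
      occ_parts(5) by (metis Diff_iff insert_commute)+
  then show ?thesis
    using walk \<open>a \<in> K\<close> \<open>a' \<in> K\<close> occ_parts(1) unfolding gadget_needed_def by blast
qed

lemma reduced_graph_colouring_walk_parity:
  assumes c: "proper_2col_on G' (fst G' - S') c" and S': "S' \<subseteq> Orig ` K"
    and a: "a \<in> K - Orig -` S'" "a' \<in> K - Orig -` S'" and walk: "has_par_walk G (XB - Bs) a a' p"
  shows "(c (Orig a) \<noteq> c (Orig a')) = p"
proof -
  have P: "gn {a, a'} p"
    using walk a by (intro has_par_walk_gadget_needed) auto
  have ends: "{pfst {a, a'}, psnd {a, a'}} = {a, a'}"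
    using gadget_needed_pair(1)[OF P] by simp
  have "Gad {a, a'} p 0 0 \<in> fst G' - S'" "p \<longrightarrow> Gad {a, a'} p 0 1 \<in> fst G' - S'"
    using S' gadget_vertices[OF P, of 0] by auto
  moreover have "Orig (pfst {a, a'}) \<in> fst G' - S'" "Orig (psnd {a, a'}) \<in> fst G' - S'"
    using orig_vertex a ends by (auto simp: doubleton_eq_iff)
  ultimately have "(c (Orig (pfst {a, a'})) \<noteq> c (Orig (psnd {a, a'}))) = p"
    by (intro gadget_copy_parity[OF c P]) auto
  then show ?thesis
    using ends unfolding doubleton_eq_iff by auto
qed

lemma oct_of_oct_reduced_graph:
  assumes S': "is_oct G' S'" "S' \<subseteq> Orig ` K"
  shows "is_oct G (Orig -` S')"
proof -
  obtain c where c: "proper_2col_on G' (fst G' - S') c"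
    using S' unfolding is_oct_def bipartite_on_iff_proper_2col by blast
  let ?A = "K - Orig -` S'"
  have "bipartite_on G (?A \<union> (XB - Bs))"
  proof (rule bipartite_on_glue_along_walks)
    show "?A \<union> (XB - Bs) \<subseteq> fst G"
      using occ_parts(1) by blast
    show "proper_2col_on G (XB - Bs) f"
      using f unfolding proper_2col_on_def by blast
    show "proper_2col_on G ?A (c \<circ> Orig)"
      using c orig_vertex orig_edge unfolding proper_2col_on_def by simp
  qed (use reduced_graph_colouring_walk_parity[OF c S'(2)] in simp)
  moreover have "Orig -` S' \<subseteq> K"
    using S'(2) by auto
  then have "?A \<union> (XB - Bs) = fst G - Orig -` S'"
    using occ_parts(1) by auto
  ultimately show ?thesis
    using \<open>Orig -` S' \<subseteq> K\<close> unfolding is_oct_def by auto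
qed

lemma oct_reduced_graph_of_oct:
  assumes S: "is_oct G S" "S \<subseteq> K"
  shows "is_oct G' (Orig ` S)"
proof -
  obtain c where c: "proper_2col_on G (fst G - S) c"
    using S unfolding is_oct_def bipartite_on_iff_proper_2col by blast
  define d where "d x = (case x of Orig u \<Rightarrow> c u | Gad P b k i \<Rightarrow> False)" for x
  have "bipartite_on G' (fst G' - Orig ` S)"
  proof (rule bipartite_reduced_graph_recolour[where d = d and R = "\<lambda>_ _. True"])
    fix x y assume "{x, y} \<in> snd G'" "x \<in> fst G' - Orig ` S" "y \<in> fst G' - Orig ` S"
      "\<not> recoloured (\<lambda>_ _. True) x" "\<not> recoloured (\<lambda>_ _. True) y"
    then show "d x \<noteq> d y"
      using c unfolding recoloured_def d_def proper_2col_on_def reduced_graph_edges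
      by (auto split: rv.splits simp: doubleton_eq_iff)
  next
    fix Q b assume Q: "gn Q b" and ends: "Orig (pfst Q) \<in> fst G' - Orig ` S" "Orig (psnd Q) \<in> fst G' - Orig ` S"
    then obtain u v where uv: "Q = {u, v}" "has_par_walk G (XB - Bs) u v b"
      unfolding gadget_needed_def by blast
    have "u \<in> fst G - S" "v \<in> fst G - S"
      using uv(1) gadget_needed_pair(1)[OF Q] gadget_needed_subset[OF Q] ends
      by (auto simp: doubleton_eq_iff)
    then have "(c u \<noteq> c v) \<longleftrightarrow> b"
      using has_par_walk_parity[OF c uv(2)] S(2) occ_parts(1) by blast
    then show "(d (Orig (pfst Q)) \<noteq> d (Orig (psnd Q))) = b"
      using uv(1) gadget_needed_pair(1)[OF Q] unfolding d_def by (auto simp: doubleton_eq_iff)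
  qed
  then show ?thesis
    using S unfolding is_oct_def reduced_graph_vertices by auto
qed

subsection \<open>Shrinking a minimum OCT of G into the kept vertices\<close>

lemma oct_trade_XB_for_XC:
  assumes S: "is_oct G S"
  shows "is_oct G (S - XB \<union> XC)"
proof -
  obtain c where c: "proper_2col_on G (fst G - S) c"
    using S unfolding is_oct_def bipartite_on_iff_proper_2col by blast
  have "proper_2col_on G (fst G - (S - XB \<union> XC)) (\<lambda>x. if x \<in> XB then f x else c x)"
    unfolding proper_2col_on_def
  proof (intro ballI impI)
    fix u v assume uv: "u \<in> fst G - (S - XB \<union> XC)" "v \<in> fst G - (S - XB \<union> XC)" and e: "{u, v} \<in> snd G"
    consider "u \<in> XB" "v \<in> XB" | "u \<in> XB" "v \<in> XR" | "u \<in> XR" "v \<in> XB"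
      | "u \<in> fst G - S" "v \<in> fst G - S" "u \<notin> XB" "v \<notin> XB"
      using uv occ_parts(1) by blast
    then show "(if u \<in> XB then f u else c u) \<noteq> (if v \<in> XB then f v else c v)"
    proof cases
      case 1
      then show ?thesis using f e unfolding proper_2col_on_def by simp
    next
      case 2
      then show ?thesis using occ_parts(5) e by blast
    next
      case 3
      then show ?thesis using occ_parts(5)[of v u] e by (simp add: insert_commute)
    next
      case 4
      then show ?thesis using c e unfolding proper_2col_on_def by simp
    qed
  qed
  then show ?thesis
    using S occ_parts(1) unfolding is_oct_def bipartite_on_iff_proper_2col by blast
qed

lemma min_oct_card_inter_XB:
  assumes "is_min_oct G S"
  shows "card (S \<inter> XB) \<le> card (terminals XC)"
proof -
  have fin: "finite S" "finite XC"
    using assms finite_vertices occ_parts(1) unfolding is_min_oct_def is_oct_def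
    by (auto intro: finite_subset)
  have "card (S \<inter> XB) + card (S - XB) = card S"
    using card_Int_Diff[OF fin(1)] by simp
  also have "\<dots> \<le> card (S - XB \<union> XC)"
    using assms oct_trade_XB_for_XC unfolding is_min_oct_def by blast
  also have "\<dots> \<le> card (S - XB) + card XC"
    by (rule card_Un_le)
  also have "card XC = card ((\<lambda>v. Term v True) ` XC)"
    by (simp add: card_image inj_on_def)
  also have "\<dots> \<le> card (terminals XC)"
  proof (rule card_mono)
    have "terminals XC = (\<lambda>(v, i). Term v i) ` (XC \<times> UNIV)"
      unfolding terminals_def by auto
    then show "finite (terminals XC)"
      using fin by simp
  qed (auto simp: terminals_def)
  finally show ?thesis by simp
qed

lemma aux_graph_edgeE:
  assumes "{x, y} \<in> snd Ga"
  obtains u w where "{x, y} = {Base u, Base w}" "u \<in> XB" "w \<in> XB" "{u, w} \<in> snd G"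
    | u v where "{x, y} = {Term v (f u), Base u}" "v \<in> XC" "u \<in> XB" "{u, v} \<in> snd G"
  using assms unfolding aux_graph_def by auto

lemma colour_side_aux_edge:
  assumes c: "proper_2col_on G (fst G - S) c"
    and W: "x \<in> fst Ga - terminals (XC \<inter> S) - Base ` (S \<inter> XB)"
      "y \<in> fst Ga - terminals (XC \<inter> S) - Base ` (S \<inter> XB)"
    and e: "{x, y} \<in> snd Ga"
  shows "colour_side c f x = colour_side c f y"
  using e
proof (cases rule: aux_graph_edgeE)
  case (1 u w)
  then have "u \<in> fst G - S" "w \<in> fst G - S"
    using W occ_parts(1) by (auto simp: doubleton_eq_iff)
  then have "c u \<noteq> c w" "f u \<noteq> f w"
    using 1 c f unfolding proper_2col_on_def by auto
  then show ?thesis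
    using 1(1) unfolding colour_side_def by (auto simp: doubleton_eq_iff)
next
  case (2 u v)
  then have "u \<in> fst G - S" "v \<in> fst G - S"
    using W occ_parts(1) unfolding terminals_def by (auto simp: doubleton_eq_iff)
  then have "c u \<noteq> c v"
    using 2 c unfolding proper_2col_on_def by auto
  then show ?thesis
    using 2(1) unfolding colour_side_def by (auto simp: doubleton_eq_iff)
qed

lemma oct_separates_terminals:
  assumes c: "proper_2col_on G (fst G - S) c"
  shows "separates3 Ga (S \<inter> XB) (coloured_terminals c (XC - S))
    (coloured_terminals (Not \<circ> c) (XC - S)) {} (terminals (XC \<inter> S))"
proof (rule separates3_two_sidesI)
  fix a b assume "a \<in> coloured_terminals c (XC - S)" "b \<in> coloured_terminals (Not \<circ> c) (XC - S)"
  then have sides: "colour_side c f a \<noteq> colour_side c f b"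
    unfolding coloured_terminals_def colour_side_def by auto
  show "\<not> connected_in Ga (fst Ga - terminals (XC \<inter> S) - Base ` (S \<inter> XB)) a b"
  proof
    assume "connected_in Ga (fst Ga - terminals (XC \<inter> S) - Base ` (S \<inter> XB)) a b"
    then have "colour_side c f a = colour_side c f b"
      by (rule connected_in_invariant) (rule colour_side_aux_edge[OF c])
    with sides show False
      by contradiction
  qed
qed

lemma separator_side_of_XC_neighbour:
  assumes sep: "separates3 Ga Ss (coloured_terminals c (XC - S))
      (coloured_terminals (Not \<circ> c) (XC - S)) {} (terminals (XC \<inter> S))"
    and "x \<in> XB - Ss" "y \<in> XC - S" "{x, y} \<in> snd G"
  defines "W \<equiv> fst Ga - terminals (XC \<inter> S) - Base ` Ss"
  shows "reached_from Ga W (coloured_terminals c (XC - S)) (Base x) \<longleftrightarrow> c y = f x"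
proof -
  have e: "{Term y (f x), Base x} \<in> snd Ga"
    using assms(2-4) unfolding aux_graph_def snd_conv by blast
  have W: "Term y (f x) \<in> W" "Base x \<in> W"
    using assms(2,3) unfolding W_def aux_graph_def terminals_def by auto
  then have "reached_from Ga W (coloured_terminals c (XC - S)) (Base x) \<longleftrightarrow>
      reached_from Ga W (coloured_terminals c (XC - S)) (Term y (f x))"
    using reached_from_edge[OF _ _ e] by blast
  also have "\<dots> \<longleftrightarrow> c y = f x"
  proof
    assume "c y = f x"
    then have "Term y (f x) \<in> coloured_terminals c (XC - S)"
      using assms(3) unfolding coloured_terminals_def by blast
    then show "reached_from Ga W (coloured_terminals c (XC - S)) (Term y (f x))"
      using W(1) unfolding reached_from_def connected_in_def by blast
  next
    assume "reached_from Ga W (coloured_terminals c (XC - S)) (Term y (f x))"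
    then obtain t where "t \<in> coloured_terminals c (XC - S)" "connected_in Ga W t (Term y (f x))"
      unfolding reached_from_def by blast
    moreover have "Term y (f x) \<notin> coloured_terminals (Not \<circ> c) (XC - S)"
      using separates3_two_sidesD[OF sep coloured_terminals_disjoint] calculation
      unfolding W_def by blast
    ultimately show "c y = f x"
      using assms(3) unfolding coloured_terminals_def by auto
  qed
  finally show ?thesis .
qed

lemma separator_colouring_XB_edge:
  assumes sep: "separates3 Ga Ss (coloured_terminals c (XC - S))
      (coloured_terminals (Not \<circ> c) (XC - S)) {} (terminals (XC \<inter> S))"
    and x: "x \<in> XB - Ss" and y: "y \<in> fst G - (S - XB \<union> Ss)" and e: "{x, y} \<in> snd G"
  defines "reached \<equiv> reached_from Ga (fst Ga - terminals (XC \<inter> S) - Base ` Ss) (coloured_terminals c (XC - S))"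
  shows "(f x \<noteq> reached (Base x)) \<noteq> (if y \<in> XB then f y \<noteq> reached (Base y) else c y)"
proof (cases "y \<in> XB")
  case True
  have "{Base x, Base y} \<in> snd Ga"
    using x True e unfolding aux_graph_def by auto
  then have "reached (Base x) \<longleftrightarrow> reached (Base y)"
    unfolding reached_def using x y True
    by (intro reached_from_edge) (auto simp: aux_graph_def terminals_def)
  then show ?thesis
    using f x True e unfolding proper_2col_on_def by auto
next
  case False
  then have "y \<in> XC - S"
    using x y e occ_parts(1,5) by blast
  then show ?thesis
    using separator_side_of_XC_neighbour[OF sep x _ e] False unfolding reached_def by auto
qed

lemma oct_of_separator:
  assumes S: "S \<subseteq> fst G" and c: "proper_2col_on G (fst G - S) c" and Ss: "Ss \<subseteq> XB"
    and sep: "separates3 Ga Ss (coloured_terminals c (XC - S))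
      (coloured_terminals (Not \<circ> c) (XC - S)) {} (terminals (XC \<inter> S))"
  shows "is_oct G (S - XB \<union> Ss)"
proof -
  let ?reached = "reached_from Ga (fst Ga - terminals (XC \<inter> S) - Base ` Ss) (coloured_terminals c (XC - S))"
  define col where "col x = (if x \<in> XB then f x \<noteq> ?reached (Base x) else c x)" for x
  have "proper_2col_on G (fst G - (S - XB \<union> Ss)) col"
    unfolding proper_2col_on_def
  proof (intro ballI impI)
    fix x y assume xy: "x \<in> fst G - (S - XB \<union> Ss)" "y \<in> fst G - (S - XB \<union> Ss)" and e: "{x, y} \<in> snd G"
    consider "x \<in> XB" | "y \<in> XB" | "x \<notin> XB" "y \<notin> XB"
      by blast
    then show "col x \<noteq> col y"
    proof cases
      case 1
      then show ?thesis
        using separator_colouring_XB_edge[OF sep _ xy(2) e] xy unfolding col_def by simp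
    next
      case 2
      then show ?thesis
        using separator_colouring_XB_edge[OF sep _ xy(1)] xy e unfolding col_def
        by (simp add: insert_commute)
    next
      case 3
      then show ?thesis
        using c xy e unfolding proper_2col_on_def col_def by simp
    qed
  qed
  moreover have "S - XB \<union> Ss \<subseteq> fst G"
    using S Ss occ_parts(1) by blast
  ultimately show ?thesis
    unfolding is_oct_def bipartite_on_iff_proper_2col by blast
qed

lemma min_oct_shrinks_into_K:
  assumes star: "star_property G XB XC f Bs" and min: "is_min_oct G S"
  obtains S2 where "S2 \<subseteq> K" "card S2 \<le> card S" "is_oct G S2"
proof -
  have S: "S \<subseteq> fst G" "finite S"
    using min finite_vertices unfolding is_min_oct_def is_oct_def by (auto intro: finite_subset)
  obtain c where c: "proper_2col_on G (fst G - S) c"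
    using min unfolding is_min_oct_def is_oct_def bipartite_on_iff_proper_2col by blast
  define T1 where "T1 = coloured_terminals c (XC - S)"
  define T2 where "T2 = coloured_terminals (Not \<circ> c) (XC - S)"
  define TX where "TX = terminals (XC \<inter> S)"
  have sep: "separates3 Ga (S \<inter> XB) T1 T2 {} TX"
    using oct_separates_terminals[OF c] unfolding T1_def T2_def TX_def .
  then have "\<exists>S'. S' \<subseteq> XB \<and> card S' \<le> card (terminals XC) \<and> separates3 Ga S' T1 T2 {} TX"
    using min_oct_card_inter_XB[OF min] by blast
  moreover have "T1 \<union> T2 \<union> {} \<union> TX = terminals XC \<and> T1 \<inter> T2 = {} \<and> T1 \<inter> {} = {} \<and>
      T1 \<inter> TX = {} \<and> T2 \<inter> {} = {} \<and> T2 \<inter> TX = {} \<and> {} \<inter> TX = {}"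
    unfolding T1_def T2_def TX_def by (rule terminals_partition)
  ultimately obtain Ss where Ss: "Ss \<subseteq> Bs" "separates3 Ga Ss T1 T2 {} TX"
    "\<And>S'. S' \<subseteq> XB \<and> separates3 Ga S' T1 T2 {} TX \<Longrightarrow> card Ss \<le> card S'"
    using star[unfolded star_property_def Let_def, THEN spec[of _ T1], THEN spec[of _ T2],
        THEN spec[of _ "{}"], THEN spec[of _ TX]]
    by meson
  have "card (S - XB \<union> Ss) \<le> card (S - XB) + card (S \<inter> XB)"
    using card_Un_le[of "S - XB" Ss] Ss(3)[OF conjI[OF _ sep]] by simp
  also have "\<dots> = card S"
    using card_Int_Diff[OF S(2), of XB] by simp
  finally show ?thesis
    using that[of "S - XB \<union> Ss"] oct_of_separator[OF S(1) c] Ss(1,2) Bs S(1) occ_parts(1)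
    unfolding T1_def T2_def TX_def by blast
qed

lemma min_oct_reduced_graph_card_le:
  assumes star: "star_property G XB XC f Bs" and S': "is_min_oct G' S'" and S: "is_oct G S"
  shows "card S' \<le> card S"
proof -
  obtain Smin where min: "is_min_oct G Smin"
    using min_oct_exists by blast
  then obtain S2 where S2: "S2 \<subseteq> K" "card S2 \<le> card Smin" "is_oct G S2"
    using min_oct_shrinks_into_K[OF star] by blast
  have "card S' \<le> card (Orig ` S2)"
    using S' oct_reduced_graph_of_oct[OF S2(3,1)] unfolding is_min_oct_def by blast
  also have "\<dots> \<le> card Smin"
    using S2(2) by (simp add: card_image inj_on_def)
  also have "\<dots> \<le> card S"
    using min S unfolding is_min_oct_def by blast
  finally show ?thesis .
qed

end

theorem lemma5p3:
  fixes G :: "'a graph" and XB XC XR Bs :: "'a set" and f :: "'a \<Rightarrow> bool"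
    and S' :: "'a rv set"
  assumes "graph G"
    and "is_occ G XB XC XR"
    and "proper_2col_on G XB f"
    and "Bs \<subseteq> XB"
    and "star_property G XB XC f Bs"
    and "is_min_oct (reduced_graph G XB XC Bs) S'"
  shows "S' \<subseteq> Orig ` fst G \<inter> fst (reduced_graph G XB XC Bs)
         \<and> is_min_oct G (Orig -` S')"
proof -
  interpret occ_reduction G XB XC XR Bs f
    using assms(1-4) by unfold_locales
  have S'_K: "S' \<subseteq> Orig ` K" and S': "is_oct G' S'"
    using min_oct_reduced_graph_avoids_gadgets[OF assms(6)] assms(6) unfolding is_min_oct_def by auto
  have "S' \<subseteq> range Orig"
    using S'_K by auto
  then have "is_min_oct G (Orig -` S')"
    using oct_of_oct_reduced_graph[OF S' S'_K] min_oct_reduced_graph_card_le[OF assms(5,6)]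
      card_vimage_inj[of Orig S'] unfolding is_min_oct_def inj_def by auto
  moreover have "S' \<subseteq> Orig ` fst G \<inter> fst G'"
    using S'_K S' unfolding is_oct_def by auto
  ultimately show ?thesis
    by blast
qed

end
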